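(* Let $Q$ be an ADE quiver with $n$ vertices and $h_Q$ the Coxeter number of its underlying graph. Then for every $\sigma=(Z,\mathcal{P})\in\mathrm{Stab}_{\mathcal{A}_{\mathrm{can}}}(\mathcal{D}_Q)$, $$\mathrm{vol}(\sigma)=\sum_{i,j=1}^n\chi^{ij}Z(S_i)\overline{Z(S_j)}=\frac{1}{h_Q}\sum_{M\in\Delta^+_Q}|Z(M)|^2,$$ where $(\chi^{ij})$ is the inverse of the matrix $(\chi(S_i,S_j))_{i,j}$. Equivalently, for all $1\le i,j\le n$, $\chi^{ij}=\frac{1}{h_Q}\sum_{M\in\Delta^+_Q}c_i(M)c_j(M)$, where $c_i(M)\in\mathbb{Z}_{\ge0}$ is the coefficient of $[S_i]$ in $M$.
   Context: Let $\mathbb{K}$ be a field and $Q$ a quiver whose underlying graph is a Dynkin graph of type A, D or E, with vertices $1,\dots,n$ and arrow set $Q_1$. The 2-Calabi–Yau Ginzburg dg algebra $\Gamma_Q$ is the graded path algebra of the quiver with arrows $a\in Q_1$ (degree $0$), opposite arrows $a^*:j\to i$ for $a:i\to j$ (degree $0$) and loops $t_i$ (degree $-1$), with differential $da=da^*=0$, $dt_i=\sum_{a\in Q_1}e_i(aa^*-a^*a)e_i$. $\mathcal{D}_Q$ is the triangulated category of dg $\Gamma_Q$-modules with finite-dimensional total cohomology (a full subcategory of the derived category). $S_1,\dots,S_n$ are the simple modules at the vertices; $K(\mathcal{D}_Q)\cong\mathbb{Z}^n$ with basis $[S_i]$, and the Euler form $\chi(E,F)=\sum_i(-1)^i\dim\mathrm{Hom}(E,F[i])$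 has matrix $(\chi(S_i,S_j))$ equal to the Cartan matrix of the Dynkin graph. $\Delta^+_Q\subset K(\mathcal{D}_Q)$ denotes the set of elements corresponding to the positive roots of the Dynkin graph under the identification of $[S_1],\dots,[S_n]$ with the simple roots. Coxeter numbers: $h_{A_n}=n+1$, $h_{D_n}=2(n-1)$, $h_{E_6}=12$, $h_{E_7}=18$, $h_{E_8}=30$. A stability condition $\sigma=(Z,\mathcal{P})$ consists of a central charge $Z:K(\mathcal{D}_Q)\to\mathbb{C}$ and slicing $\mathcal{P}$ satisfying Bridgeland's axioms; its heart is $\mathcal{P}(0,1]$. $\mathcal{A}_{\mathrm{can}}$ is the heart of the standard t-structure (aisle: $H^i(M)=0$ for $i>0$), with simple objects $S_1,\dots,S_n$; $\mathrm{Stab}_{\mathcal{A}_{\mathrm{can}}}(\mathcal{D}_Q)$ is the set of stability conditions with heart $\mathcal{A}_{\mathrm{can}}$ (for these $Z(S_i)\in\{re^{i\pi\phi}:r>0,\phi\in(0,1]\}$). The categorical volume is $\mathrm{vol}(\sigma)=\left|\sum_{i,j}\chi^{ij}Z(E_i)\overline{Z(E_j)}\right|$ for any basis $E_1,\dots,E_n$ of $K(\mathcal{D}_Q)$, with $(\chi^{ij})$ the inverse of $(\chi(E_i,E_j))$. *)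

theory Defs
  imports "HOL-Analysis.Analysis"
begin

datatype dynkin_type = Type_A nat | Type_D nat | Type_E nat

fun dynkin_valid :: "dynkin_type \<Rightarrow> bool" where
  "dynkin_valid (Type_A m) = (m \<ge> 1)"
| "dynkin_valid (Type_D m) = (m \<ge> 4)"
| "dynkin_valid (Type_E m) = (m \<in> {6, 7, 8})"

fun dynkin_rank :: "dynkin_type \<Rightarrow> nat" where
  "dynkin_rank (Type_A m) = m"
| "dynkin_rank (Type_D m) = m"
| "dynkin_rank (Type_E m) = m"

fun coxeter_number :: "dynkin_type \<Rightarrow> nat" where
  "coxeter_number (Type_A m) = m + 1"
| "coxeter_number (Type_D m) = 2 * (m - 1)"
| "coxeter_number (Type_E m) = (if m = 6 then 12 else if m = 7 then 18 else 30)"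

fun std_edge_dir :: "dynkin_type \<Rightarrow> nat \<Rightarrow> nat \<Rightarrow> bool" where
  "std_edge_dir (Type_A m) a b = (b = a + 1 \<and> b < m)"
| "std_edge_dir (Type_D m) a b = ((b = a + 1 \<and> b < m - 1) \<or> (a = m - 3 \<and> b = m - 1))"
| "std_edge_dir (Type_E m) a b = ((b = a + 1 \<and> b < m - 1) \<or> (a = 2 \<and> b = m - 1))"

definition std_edge :: "dynkin_type \<Rightarrow> nat \<Rightarrow> nat \<Rightarrow> bool" where
  "std_edge T a b \<longleftrightarrow> std_edge_dir T a b \<or> std_edge_dir T b a"

text \<open>A quiver with vertex set the finite type 'n and arrow set Q1 (an arrow i \<rightarrow> j
  is the pair (i,j)); since the underlying graph is Dynkin, there are no loops or
  multiple edges, so a set of pairs suffices.\<close>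

definition adjacent :: "('n \<times> 'n) set \<Rightarrow> 'n \<Rightarrow> 'n \<Rightarrow> bool" where
  "adjacent Q1 i j \<longleftrightarrow> (i, j) \<in> Q1 \<or> (j, i) \<in> Q1"

definition dynkin_quiver :: "dynkin_type \<Rightarrow> ('n::finite \<times> 'n) set \<Rightarrow> bool" where
  "dynkin_quiver T Q1 \<longleftrightarrow>
     dynkin_valid T \<and>
     (\<forall>i. (i, i) \<notin> Q1) \<and>
     (\<forall>i j. (i, j) \<in> Q1 \<longrightarrow> (j, i) \<notin> Q1) \<and>
     (\<exists>f. bij_betw f (UNIV :: 'n set) {0..<dynkin_rank T} \<and>
          (\<forall>i j. adjacent Q1 i j \<longleftrightarrow> std_edge T (f i) (f j)))"

definition euler_form :: "('n \<times> 'n) set \<Rightarrow> 'n \<Rightarrow> 'n \<Rightarrow> int" where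
  "euler_form Q1 i j = (if i = j then 2 else if adjacent Q1 i j then -1 else 0)"

definition euler_matrix :: "('n::finite \<times> 'n) set \<Rightarrow> real^'n^'n" where
  "euler_matrix Q1 = (\<chi> i j. real_of_int (euler_form Q1 i j))"

definition chi_inv :: "('n::finite \<times> 'n) set \<Rightarrow> 'n \<Rightarrow> 'n \<Rightarrow> real" where
  "chi_inv Q1 i j = matrix_inv (euler_matrix Q1) $ i $ j"

section \<open>Positive roots in K(D_Q) = Z^n (coordinates w.r.t. [S_1],...,[S_n])\<close>

definition simple_root :: "'n::finite \<Rightarrow> int^'n" where
  "simple_root i = (\<chi> k. if k = i then 1 else 0)"

definition simple_reflection :: "('n::finite \<times> 'n) set \<Rightarrow> 'n \<Rightarrow> int^'n \<Rightarrow> int^'n" where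
  "simple_reflection Q1 i v =
     (\<chi> k. if k = i then v $ k - (\<Sum>j\<in>UNIV. euler_form Q1 i j * v $ j) else v $ k)"

inductive_set roots :: "('n::finite \<times> 'n) set \<Rightarrow> (int^'n) set" for Q1 where
  simple: "simple_root i \<in> roots Q1"
| reflect: "v \<in> roots Q1 \<Longrightarrow> simple_reflection Q1 i v \<in> roots Q1"

definition positive_roots :: "('n::finite \<times> 'n) set \<Rightarrow> (int^'n) set" where
  "positive_roots Q1 = {v \<in> roots Q1. \<forall>k. v $ k \<ge> 0}"

text \<open>Z(S_i) must lie in {r e^{i pi phi} : r > 0, phi in (0,1]}.\<close>
definition semi_closed_upper_half_plane :: "complex set" where
  "semi_closed_upper_half_plane =
     {complex_of_real r * exp (\<i> * complex_of_real (pi * \<phi>)) | r \<phi>. r > 0 \<and> 0 < \<phi> \<and> \<phi> \<le> 1}"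

definition central_charge :: "('n::finite \<Rightarrow> complex) \<Rightarrow> int^'n \<Rightarrow> complex" where
  "central_charge z v = (\<Sum>i\<in>UNIV. of_int (v $ i) * z i)"

definition cat_volume :: "('n::finite \<times> 'n) set \<Rightarrow> ('n \<Rightarrow> complex) \<Rightarrow> real" where
  "cat_volume Q1 z = cmod (\<Sum>i\<in>UNIV. \<Sum>j\<in>UNIV. complex_of_real (chi_inv Q1 i j) * z i * cnj (z j))"

end

theory Submission
  imports Defs
begin

text \<open>Let \<open>\<Phi>\<close> be the set of roots, i.e. the orbit of the simple roots under the simple
  reflections, and \<open>C\<close> the Euler (Cartan) matrix. Reindexing the Casimir matrix
  \<open>K(j, l) = \<Sum>\<^sub>\<alpha> \<alpha>\<^sub>j (C \<alpha>)\<^sub>l\<close> (\<open>\<alpha> \<in> \<Phi>\<close>) by the reflection \<open>s\<^sub>l\<close>, which changes the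
  sign of \<open>(C \<alpha>)\<^sub>l\<close>, shows that \<open>K\<close> is diagonal and that adjacent diagonal entries agree; on a
  connected graph \<open>K\<close> is therefore scalar, and its trace \<open>\<Sum>\<^sub>\<alpha> (\<alpha>, \<alpha>) = 2 |\<Phi>|\<close>
  determines it. If every root is positive or negative and \<open>2 |\<Phi>\<^sup>+| = n h\<close>, this says
  \<open>\<Sum>\<^sub>\<alpha> \<alpha> \<alpha>\<^sup>T C = h I\<close> with \<open>\<alpha>\<close> ranging over \<open>\<Phi>\<^sup>+\<close>, so \<open>C\<^sup>-\<^sup>1\<close> is
  \<open>1/h\<close> times that sum of outer products, and the volume formula follows by expanding
  \<open>|Z(\<alpha>)|\<^sup>2\<close>. Sign coherence and the count of positive roots are verified type by type: in
  simple-root coordinates the positive roots are \<open>e\<^sub>i - e\<^sub>j\<close> for \<open>A\<close>, \<open>e\<^sub>i \<plusminus> e\<^sub>j\<close> for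
  \<open>D\<close>, and explicit lists certified by evaluation for \<open>E\<close>.\<close>

definition euler_pairing :: "('n::finite \<times> 'n) set \<Rightarrow> 'n \<Rightarrow> int^'n \<Rightarrow> int" where
  "euler_pairing Q1 i v = (\<Sum>j\<in>UNIV. euler_form Q1 i j * v $ j)"

definition euler_bilinear :: "('n::finite \<times> 'n) set \<Rightarrow> int^'n \<Rightarrow> int^'n \<Rightarrow> int" where
  "euler_bilinear Q1 u v = (\<Sum>i\<in>UNIV. u $ i * euler_pairing Q1 i v)"

lemma euler_form_commute: "euler_form Q1 i j = euler_form Q1 j i"
  by (auto simp: euler_form_def adjacent_def)

lemma euler_form_diag [simp]: "euler_form Q1 i i = 2"
  by (simp add: euler_form_def)

lemma simple_reflection_nth:
  "simple_reflection Q1 i v $ k = (if k = i then v $ k - euler_pairing Q1 i v else v $ k)"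
  by (simp add: simple_reflection_def euler_pairing_def)

lemma euler_pairing_simple_root: "euler_pairing Q1 i (simple_root k) = euler_form Q1 i k"
  by (simp add: euler_pairing_def simple_root_def if_distrib cong: if_cong)

lemma euler_pairing_uminus: "euler_pairing Q1 i (- v) = - euler_pairing Q1 i v"
  by (simp add: euler_pairing_def sum_negf)

lemma sum_subtract_at:
  fixes u X :: "'n::finite \<Rightarrow> 'a::comm_ring"
  shows "(\<Sum>k\<in>UNIV. (if k = i then u k - a else u k) * X k) = (\<Sum>k\<in>UNIV. u k * X k) - a * X i"
proof -
  have "(\<Sum>k\<in>UNIV. (if k = i then u k - a else u k) * X k)
      = (\<Sum>k\<in>UNIV. u k * X k - (if k = i then a * X k else 0))"
    by (rule sum.cong) (auto simp: algebra_simps)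
  then show ?thesis
    by (simp add: sum_subtractf)
qed

lemma euler_pairing_simple_reflection:
  "euler_pairing Q1 j (simple_reflection Q1 i v)
     = euler_pairing Q1 j v - euler_pairing Q1 i v * euler_form Q1 j i"
proof -
  have "euler_pairing Q1 j (simple_reflection Q1 i v)
      = (\<Sum>k\<in>UNIV. (if k = i then v $ k - euler_pairing Q1 i v else v $ k) * euler_form Q1 j k)"
    unfolding euler_pairing_def simple_reflection_nth by (simp add: mult.commute)
  also have "\<dots> = (\<Sum>k\<in>UNIV. v $ k * euler_form Q1 j k) - euler_pairing Q1 i v * euler_form Q1 j i"
    by (rule sum_subtract_at)
  finally show ?thesis
    by (simp add: euler_pairing_def mult.commute)
qed

lemma simple_reflection_involution [simp]:
  "simple_reflection Q1 i (simple_reflection Q1 i v) = v"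
  by (simp add: vec_eq_iff simple_reflection_nth euler_pairing_simple_reflection)

lemma simple_reflection_uminus:
  "simple_reflection Q1 i (- v) = - simple_reflection Q1 i v"
  by (simp add: vec_eq_iff simple_reflection_nth euler_pairing_uminus)

lemma simple_reflection_simple_root:
  "simple_reflection Q1 i (simple_root i) = - simple_root i"
  by (simp add: vec_eq_iff simple_reflection_nth euler_pairing_simple_root) (simp add: simple_root_def)

lemma uminus_roots: "v \<in> roots Q1 \<Longrightarrow> - v \<in> roots Q1"
proof (induction rule: roots.induct)
  case (simple i)
  then show ?case
    using roots.reflect[OF roots.simple, of Q1 i i] by (simp add: simple_reflection_simple_root)
next
  case (reflect v i)
  then show ?case
    using roots.reflect[OF reflect.IH, of i] by (simp add: simple_reflection_uminus)
qed

lemma euler_bilinear_simple_reflection: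
  "euler_bilinear Q1 (simple_reflection Q1 i u) (simple_reflection Q1 i v) = euler_bilinear Q1 u v"
proof -
  let ?a = "euler_pairing Q1 i u" and ?b = "euler_pairing Q1 i v"
  have "(\<Sum>k\<in>UNIV. simple_reflection Q1 i u $ k * euler_form Q1 k i)
      = euler_pairing Q1 i (simple_reflection Q1 i u)"
    by (simp add: euler_pairing_def euler_form_commute mult.commute)
  then have reflected: "(\<Sum>k\<in>UNIV. simple_reflection Q1 i u $ k * euler_form Q1 k i) = - ?a"
    by (simp add: euler_pairing_simple_reflection)
  have "euler_bilinear Q1 (simple_reflection Q1 i u) (simple_reflection Q1 i v)
      = (\<Sum>k\<in>UNIV. simple_reflection Q1 i u $ k * euler_pairing Q1 k v)
        - ?b * (\<Sum>k\<in>UNIV. simple_reflection Q1 i u $ k * euler_form Q1 k i)"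
    unfolding euler_bilinear_def euler_pairing_simple_reflection
    by (simp add: algebra_simps sum_subtractf sum_distrib_left)
  also have "(\<Sum>k\<in>UNIV. simple_reflection Q1 i u $ k * euler_pairing Q1 k v)
      = euler_bilinear Q1 u v - ?a * ?b"
    unfolding simple_reflection_nth euler_bilinear_def by (simp add: sum_subtract_at)
  finally show ?thesis
    using reflected by simp
qed

lemma euler_bilinear_root_self: "v \<in> roots Q1 \<Longrightarrow> euler_bilinear Q1 v v = 2"
proof (induction rule: roots.induct)
  case (simple i)
  have "euler_bilinear Q1 (simple_root i) (simple_root i) = (\<Sum>k\<in>UNIV. if k = i then 2 else 0)"
    unfolding euler_bilinear_def euler_pairing_simple_root
    by (rule sum.cong) (auto simp: simple_root_def)
  then show ?case
    by simp
next
  case (reflect v i)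
  then show ?case
    by (simp add: euler_bilinear_simple_reflection)
qed

lemma zero_notin_roots: "0 \<notin> roots Q1"
  using euler_bilinear_root_self[of 0 Q1] by (auto simp: euler_bilinear_def)

section \<open>The Casimir identity and the inverse Euler matrix\<close>

definition casimir :: "('n::finite \<times> 'n) set \<Rightarrow> 'n \<Rightarrow> 'n \<Rightarrow> int" where
  "casimir Q1 j l = (\<Sum>\<alpha>\<in>roots Q1. \<alpha> $ j * euler_pairing Q1 l \<alpha>)"

lemma bij_betw_simple_reflection_roots:
  "bij_betw (simple_reflection Q1 k) (roots Q1) (roots Q1)"
  by (rule bij_betw_byWitness[where f'="simple_reflection Q1 k"]) (auto intro: roots.reflect)

lemma sum_roots_simple_reflection:
  "(\<Sum>\<alpha>\<in>roots Q1. g \<alpha>) = (\<Sum>\<alpha>\<in>roots Q1. g (simple_reflection Q1 k \<alpha>))"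
  using sum.reindex_bij_betw[OF bij_betw_simple_reflection_roots[of Q1 k], of g] by simp

lemma casimir_off_diag:
  assumes "j \<noteq> l"
  shows "casimir Q1 j l = 0"
proof -
  have "casimir Q1 j l
      = (\<Sum>\<alpha>\<in>roots Q1. simple_reflection Q1 l \<alpha> $ j * euler_pairing Q1 l (simple_reflection Q1 l \<alpha>))"
    unfolding casimir_def by (rule sum_roots_simple_reflection)
  also have "\<dots> = - casimir Q1 j l"
    using assms by (simp add: casimir_def simple_reflection_nth euler_pairing_simple_reflection sum_negf)
  finally show ?thesis
    by simp
qed

lemma casimir_diag_eq_if_adjacent:
  assumes "adjacent Q1 k l"
  shows "casimir Q1 k k = casimir Q1 l l"
proof (cases "k = l")
  case False
  define M where "M k l = (\<Sum>\<alpha>\<in>roots Q1. euler_pairing Q1 k \<alpha> * euler_pairing Q1 l \<alpha>)" for k l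
  have edge: "euler_form Q1 k l = -1" "euler_form Q1 l k = -1"
    using assms False by (auto simp: euler_form_def adjacent_def)
  have diag: "2 * casimir Q1 l l = M l l" for l
  proof -
    have "casimir Q1 l l
        = (\<Sum>\<alpha>\<in>roots Q1. simple_reflection Q1 l \<alpha> $ l * euler_pairing Q1 l (simple_reflection Q1 l \<alpha>))"
      unfolding casimir_def by (rule sum_roots_simple_reflection)
    also have "\<dots> = M l l - casimir Q1 l l"
      by (simp add: M_def casimir_def simple_reflection_nth euler_pairing_simple_reflection
          algebra_simps sum_subtractf)
    finally show ?thesis
      by simp
  qed
  have mixed: "casimir Q1 l l = - M l k" if "euler_form Q1 k l = -1" for k l
  proof -
    have "casimir Q1 l k
        = (\<Sum>\<alpha>\<in>roots Q1. simple_reflection Q1 l \<alpha> $ l * euler_pairing Q1 k (simple_reflection Q1 l \<alpha>))"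
      unfolding casimir_def by (rule sum_roots_simple_reflection)
    also have "\<dots> = (casimir Q1 l k + casimir Q1 l l) - (M l k + M l l)"
      using that euler_form_commute[of Q1 k l]
      by (simp add: M_def casimir_def simple_reflection_nth euler_pairing_simple_reflection
          algebra_simps sum_subtractf sum.distrib)
    finally show ?thesis
      using diag[of l] by simp
  qed
  have "M k l = M l k"
    by (simp add: M_def mult.commute)
  then show ?thesis
    using mixed[OF edge(1)] mixed[OF edge(2)] by simp
qed simp

lemma trace_casimir: "(\<Sum>k\<in>UNIV. casimir Q1 k k) = 2 * int (card (roots Q1))"
proof -
  have "(\<Sum>k\<in>UNIV. casimir Q1 k k) = (\<Sum>\<alpha>\<in>roots Q1. euler_bilinear Q1 \<alpha> \<alpha>)"
    unfolding casimir_def euler_bilinear_def by (rule sum.swap)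
  also have "\<dots> = (\<Sum>\<alpha>\<in>roots Q1. 2)"
    by (rule sum.cong) (auto simp: euler_bilinear_root_self)
  finally show ?thesis
    by simp
qed

definition sign_coherent :: "('n::finite \<times> 'n) set \<Rightarrow> bool" where
  "sign_coherent Q1 \<longleftrightarrow> (\<forall>v\<in>roots Q1. (\<forall>k. 0 \<le> v $ k) \<or> (\<forall>k. v $ k \<le> 0))"

definition connected_quiver :: "('n \<times> 'n) set \<Rightarrow> bool" where
  "connected_quiver Q1 \<longleftrightarrow> (\<forall>i j. (adjacent Q1)\<^sup>*\<^sup>* i j)"

lemma connected_quiver_const:
  assumes "connected_quiver Q1" and "\<And>k l. adjacent Q1 k l \<Longrightarrow> c k = c l"
  shows "c i = c j"
proof -
  have "(adjacent Q1)\<^sup>*\<^sup>* i j"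
    using assms(1) by (simp add: connected_quiver_def)
  then show ?thesis
    by (induction rule: rtranclp_induct) (auto dest: assms(2))
qed

lemma roots_eq_positive_roots_union:
  assumes "sign_coherent Q1"
  shows "roots Q1 = positive_roots Q1 \<union> uminus ` positive_roots Q1"
proof (intro equalityI subsetI)
  fix v assume v: "v \<in> roots Q1"
  show "v \<in> positive_roots Q1 \<union> uminus ` positive_roots Q1"
  proof (cases "\<forall>k. 0 \<le> v $ k")
    case False
    then have "- v \<in> positive_roots Q1"
      using assms v uminus_roots[OF v] by (auto simp: sign_coherent_def positive_roots_def)
    then show ?thesis
      by (metis UnI2 image_eqI minus_minus)
  qed (use v in \<open>auto simp: positive_roots_def\<close>)
qed (auto simp: positive_roots_def intro: uminus_roots)

lemma positive_roots_disjoint_uminus: "positive_roots Q1 \<inter> uminus ` positive_roots Q1 = {}"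
proof -
  have "v = 0" if "v \<in> positive_roots Q1" "- v \<in> positive_roots Q1" for v
    using that by (auto simp: positive_roots_def vec_eq_iff intro: order_antisym)
  then show ?thesis
    using zero_notin_roots by (fastforce simp: positive_roots_def)
qed

lemma sum_roots_even:
  fixes g :: "int^'n::finite \<Rightarrow> 'a::comm_semiring_1"
  assumes "sign_coherent Q1" and "finite (positive_roots Q1)" and "\<And>v. g (- v) = g v"
  shows "(\<Sum>\<alpha>\<in>roots Q1. g \<alpha>) = 2 * (\<Sum>\<alpha>\<in>positive_roots Q1. g \<alpha>)"
proof -
  have "(\<Sum>\<alpha>\<in>roots Q1. g \<alpha>)
      = (\<Sum>\<alpha>\<in>positive_roots Q1. g \<alpha>) + (\<Sum>\<alpha>\<in>uminus ` positive_roots Q1. g \<alpha>)"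
    unfolding roots_eq_positive_roots_union[OF assms(1)]
    using assms(2) positive_roots_disjoint_uminus by (intro sum.union_disjoint) auto
  also have "(\<Sum>\<alpha>\<in>uminus ` positive_roots Q1. g \<alpha>) = (\<Sum>\<alpha>\<in>positive_roots Q1. g \<alpha>)"
    by (subst sum.reindex) (auto simp: inj_on_def assms(3))
  finally show ?thesis
    by (simp add: mult_2)
qed

lemma positive_roots_casimir:
  fixes Q1 :: "('n::finite \<times> 'n) set"
  assumes coherent: "sign_coherent Q1" and finite: "finite (positive_roots Q1)"
    and connected: "connected_quiver Q1"
    and card: "2 * card (positive_roots Q1) = CARD('n) * h"
  shows "(\<Sum>M\<in>positive_roots Q1. M $ j * euler_pairing Q1 l M) = (if j = l then int h else 0)"
proof -
  have half: "casimir Q1 j l = 2 * (\<Sum>M\<in>positive_roots Q1. M $ j * euler_pairing Q1 l M)" for j l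
    unfolding casimir_def by (rule sum_roots_even[OF coherent finite]) (simp add: euler_pairing_uminus)
  have card_roots: "card (roots Q1) = 2 * card (positive_roots Q1)"
    using sum_roots_even[OF coherent finite, of "\<lambda>_. 1 :: nat"] by simp
  have const: "casimir Q1 k k = casimir Q1 l l" for k l
    by (rule connected_quiver_const[OF connected casimir_diag_eq_if_adjacent])
  have "(\<Sum>k\<in>UNIV. casimir Q1 k k) = (\<Sum>k\<in>(UNIV :: 'n set). casimir Q1 l l)"
    by (intro sum.cong refl const)
  then have "of_nat CARD('n) * casimir Q1 l l = (\<Sum>k\<in>UNIV. casimir Q1 k k)"
    by simp
  also have "\<dots> = 2 * of_nat CARD('n) * int h"
    using trace_casimir[of Q1] card_roots card by simp
  finally have diag: "casimir Q1 l l = 2 * int h"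
    by simp
  show ?thesis
  proof (cases "j = l")
    case True
    then show ?thesis
      using half[of l l] diag by simp
  next
    case False
    then show ?thesis
      using half[of j l] casimir_off_diag[OF False] by simp
  qed
qed

lemma matrix_inv_eqI:
  fixes A B :: "'a::field^'n^'n"
  assumes "B ** A = mat 1"
  shows "matrix_inv A = B"
proof -
  have "A ** B = mat 1"
    using assms matrix_left_right_inverse by blast
  have "A ** matrix_inv A = mat 1 \<and> matrix_inv A ** A = mat 1"
    unfolding matrix_inv_def by (rule someI[where x = B]) (simp add: assms \<open>A ** B = mat 1\<close>)
  then have "matrix_inv A = (B ** A) ** matrix_inv A"
    using assms by simp
  also have "\<dots> = B"
    using \<open>A ** matrix_inv A = mat 1 \<and> _\<close> by (metis matrix_mul_assoc matrix_mul_rid)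
  finally show ?thesis .
qed

lemma chi_inv_eq_sum_positive_roots:
  fixes Q1 :: "('n::finite \<times> 'n) set"
  assumes "sign_coherent Q1" "finite (positive_roots Q1)" "connected_quiver Q1"
    and "2 * card (positive_roots Q1) = CARD('n) * h" and "h > 0"
  shows "chi_inv Q1 i j = 1 / real h * (\<Sum>M\<in>positive_roots Q1. real_of_int (M $ i) * real_of_int (M $ j))"
proof -
  define B :: "real^'n^'n" where
    "B = (\<chi> i j. 1 / real h * (\<Sum>M\<in>positive_roots Q1. real_of_int (M $ i) * real_of_int (M $ j)))"
  have "(B ** euler_matrix Q1) $ j $ l
      = 1 / real h * real_of_int (\<Sum>M\<in>positive_roots Q1. M $ j * euler_pairing Q1 l M)" for j l
  proof -
    have "(B ** euler_matrix Q1) $ j $ l = 1 / real h *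
        (\<Sum>i\<in>UNIV. \<Sum>M\<in>positive_roots Q1. real_of_int (M $ j * (euler_form Q1 l i * M $ i)))"
      by (simp add: B_def euler_matrix_def matrix_matrix_mult_def sum_distrib_left sum_distrib_right
          euler_form_commute[of Q1 l] mult_ac)
    also have "\<dots> = 1 / real h *
        (\<Sum>M\<in>positive_roots Q1. \<Sum>i\<in>UNIV. real_of_int (M $ j * (euler_form Q1 l i * M $ i)))"
      by (subst sum.swap) (rule refl)
    finally show ?thesis
      by (simp add: euler_pairing_def sum_distrib_left)
  qed
  then have "B ** euler_matrix Q1 = mat 1"
    using positive_roots_casimir[OF assms(1-4)] assms(5) by (simp add: vec_eq_iff mat_def)
  then show ?thesis
    by (simp add: chi_inv_def matrix_inv_eqI B_def)
qed

lemma sum_outer_products_central_charge: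
  fixes P :: "(int^'n::finite) set" and z :: "'n \<Rightarrow> complex" and a :: real
  shows "(\<Sum>i\<in>UNIV. \<Sum>j\<in>UNIV.
            complex_of_real (a * (\<Sum>M\<in>P. real_of_int (M $ i) * real_of_int (M $ j))) * z i * cnj (z j))
       = complex_of_real (a * (\<Sum>M\<in>P. (cmod (central_charge z M))\<^sup>2))"
proof -
  define t where "t M i j = (of_int (M $ i) * z i) * cnj (of_int (M $ j) * z j)" for M i j
  have unscaled: "complex_of_real (\<Sum>M\<in>P. real_of_int (M $ i) * real_of_int (M $ j)) * z i * cnj (z j)
      = (\<Sum>M\<in>P. t M i j)" for i j
    unfolding t_def of_real_sum mult.assoc sum_distrib_right by (intro sum.cong refl) (simp add: mult_ac)
  have scaled: "complex_of_real (a * (\<Sum>M\<in>P. real_of_int (M $ i) * real_of_int (M $ j))) * z i * cnj (z j)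
      = of_real a * (\<Sum>M\<in>P. t M i j)" for i j
    unfolding of_real_mult mult.assoc using unscaled[of i j] by (simp only: mult.assoc)
  have "(\<Sum>i\<in>UNIV. \<Sum>j\<in>UNIV.
            complex_of_real (a * (\<Sum>M\<in>P. real_of_int (M $ i) * real_of_int (M $ j))) * z i * cnj (z j))
      = of_real a * (\<Sum>i\<in>UNIV. \<Sum>j\<in>UNIV. \<Sum>M\<in>P. t M i j)"
    unfolding scaled by (simp only: sum_distrib_left)
  also have "\<dots> = of_real a * (\<Sum>M\<in>P. \<Sum>i\<in>UNIV. \<Sum>j\<in>UNIV. t M i j)"
    by (simp only: sum.swap[of _ UNIV P])
  also have "\<dots> = of_real a * (\<Sum>M\<in>P. central_charge z M * cnj (central_charge z M))"
    unfolding t_def central_charge_def cnj_sum sum_product ..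
  also have "\<dots> = complex_of_real (a * (\<Sum>M\<in>P. (cmod (central_charge z M))\<^sup>2))"
    unfolding of_real_mult of_real_sum complex_norm_square ..
  finally show ?thesis .
qed

section \<open>Roots of the standard Dynkin graphs\<close>

definition std_cartan :: "dynkin_type \<Rightarrow> nat \<Rightarrow> nat \<Rightarrow> int" where
  "std_cartan T a b = (if a = b then 2 else if std_edge T a b then -1 else 0)"

definition std_reflection :: "dynkin_type \<Rightarrow> nat \<Rightarrow> (nat \<Rightarrow> int) \<Rightarrow> nat \<Rightarrow> int" where
  "std_reflection T k w = w(k := w k - (\<Sum>c<dynkin_rank T. std_cartan T k c * w c))"

definition unit_vec :: "nat \<Rightarrow> nat \<Rightarrow> int" where
  "unit_vec k = (\<lambda>c. if c = k then 1 else 0)"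

inductive_set std_roots :: "dynkin_type \<Rightarrow> (nat \<Rightarrow> int) set" for T where
  simple: "k < dynkin_rank T \<Longrightarrow> unit_vec k \<in> std_roots T"
| reflect: "w \<in> std_roots T \<Longrightarrow> k < dynkin_rank T \<Longrightarrow> std_reflection T k w \<in> std_roots T"

definition std_positive_roots :: "dynkin_type \<Rightarrow> (nat \<Rightarrow> int) set" where
  "std_positive_roots T = {w \<in> std_roots T. \<forall>c. 0 \<le> w c}"

definition std_sign_coherent :: "dynkin_type \<Rightarrow> bool" where
  "std_sign_coherent T \<longleftrightarrow> (\<forall>w\<in>std_roots T. (\<forall>c. 0 \<le> w c) \<or> (\<forall>c. w c \<le> 0))"

lemma std_roots_vanish: "w \<in> std_roots T \<Longrightarrow> dynkin_rank T \<le> c \<Longrightarrow> w c = 0"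
  by (induction rule: std_roots.induct) (auto simp: unit_vec_def std_reflection_def)

lemma std_edge_to_smaller:
  assumes "dynkin_valid T" "0 < k" "k < dynkin_rank T"
  shows "\<exists>l<k. std_edge T l k"
proof -
  define l where "l = (case T of Type_D m \<Rightarrow> if k = m - 1 then m - 3 else k - 1
                              | Type_E m \<Rightarrow> if k = m - 1 then 2 else k - 1
                              | Type_A m \<Rightarrow> k - 1)"
  have "l < k \<and> std_edge T l k"
    using assms by (cases T) (auto simp: l_def std_edge_def)
  then show ?thesis
    by blast
qed

locale dynkin_labelling =
  fixes T :: dynkin_type and Q1 :: "('n::finite \<times> 'n) set" and f :: "'n \<Rightarrow> nat"
  assumes bij: "bij_betw f UNIV {..<dynkin_rank T}"
    and adjacent_iff: "\<And>i j. adjacent Q1 i j \<longleftrightarrow> std_edge T (f i) (f j)"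
begin

abbreviation "m \<equiv> dynkin_rank T"
abbreviation "g \<equiv> inv_into UNIV f"

definition std_coords :: "int^'n \<Rightarrow> nat \<Rightarrow> int" where
  "std_coords v = (\<lambda>c. if c < m then v $ g c else 0)"

definition quiver_coords :: "(nat \<Rightarrow> int) \<Rightarrow> int^'n" where
  "quiver_coords w = (\<chi> i. w (f i))"

lemma f_less: "f i < m"
  using bij by (auto simp: bij_betw_def)

lemma f_eq_iff: "f i = f j \<longleftrightarrow> i = j"
  using bij by (auto simp: bij_betw_def inj_on_def)

lemma g_f [simp]: "g (f i) = i"
  using bij by (simp add: bij_betw_def)

lemma f_g: "c < m \<Longrightarrow> f (g c) = c"
  using bij by (simp add: bij_betw_inv_into_right)

lemma card_vertices: "CARD('n) = m"
  using bij_betw_same_card[OF bij] by simp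

lemma euler_form_eq_std_cartan: "euler_form Q1 i j = std_cartan T (f i) (f j)"
  by (simp add: euler_form_def std_cartan_def f_eq_iff adjacent_iff)

lemma sum_vertices: "(\<Sum>j\<in>UNIV. F (f j)) = (\<Sum>c<m. F c)"
  using sum.reindex_bij_betw[OF bij, of F] by simp

lemma euler_pairing_quiver_coords:
  "euler_pairing Q1 i (quiver_coords w) = (\<Sum>c<m. std_cartan T (f i) c * w c)"
  using sum_vertices[of "\<lambda>c. std_cartan T (f i) c * w c"]
  by (simp add: euler_pairing_def euler_form_eq_std_cartan quiver_coords_def)

lemma quiver_coords_std_coords [simp]: "quiver_coords (std_coords v) = v"
  by (simp add: vec_eq_iff quiver_coords_def std_coords_def f_less)

lemma std_coords_quiver_coords: "w \<in> std_roots T \<Longrightarrow> std_coords (quiver_coords w) = w"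
  by (rule ext) (auto simp: std_coords_def quiver_coords_def f_g std_roots_vanish)

lemma quiver_coords_std_reflection:
  assumes "k < m"
  shows "quiver_coords (std_reflection T k w) = simple_reflection Q1 (g k) (quiver_coords w)"
proof (subst vec_eq_iff, intro allI)
  fix i
  have pairing: "euler_pairing Q1 (g k) (quiver_coords w) = (\<Sum>c<m. std_cartan T k c * w c)"
    using euler_pairing_quiver_coords[of "g k" w] f_g[OF assms] by simp
  have "f i = k \<longleftrightarrow> i = g k"
    using f_g[OF assms] by auto
  then show "quiver_coords (std_reflection T k w) $ i = simple_reflection Q1 (g k) (quiver_coords w) $ i"
    unfolding simple_reflection_nth pairing by (simp add: quiver_coords_def std_reflection_def f_g[OF assms])
qed

lemma quiver_coords_unit_vec: "k < m \<Longrightarrow> quiver_coords (unit_vec k) = simple_root (g k)"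
  using f_g[of k] by (auto simp: vec_eq_iff quiver_coords_def unit_vec_def simple_root_def)

lemma quiver_coords_std_roots: "w \<in> std_roots T \<Longrightarrow> quiver_coords w \<in> roots Q1"
proof (induction rule: std_roots.induct)
  case (simple k)
  then show ?case
    by (simp add: quiver_coords_unit_vec roots.simple)
next
  case (reflect w k)
  then show ?case
    by (simp add: quiver_coords_std_reflection roots.reflect)
qed

lemma std_coords_roots: "v \<in> roots Q1 \<Longrightarrow> std_coords v \<in> std_roots T"
proof (induction rule: roots.induct)
  case (simple i)
  have "std_coords (simple_root i) = unit_vec (f i)"
    using f_g by (auto simp: fun_eq_iff std_coords_def unit_vec_def simple_root_def f_less)
  then show ?case
    by (simp add: f_less std_roots.simple)
next
  case (reflect v i)
  have "quiver_coords (std_reflection T (f i) (std_coords v)) = simple_reflection Q1 i v"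
    by (simp add: quiver_coords_std_reflection f_less)
  then have "std_coords (simple_reflection Q1 i v) = std_reflection T (f i) (std_coords v)"
    using std_coords_quiver_coords[OF std_roots.reflect[OF reflect.IH f_less]] by metis
  then show ?case
    using reflect.IH by (simp add: f_less std_roots.reflect)
qed

lemma positive_roots_eq_image: "positive_roots Q1 = quiver_coords ` std_positive_roots T"
proof (intro equalityI subsetI)
  fix v assume v: "v \<in> positive_roots Q1"
  then have "std_coords v \<in> std_roots T"
    by (simp add: positive_roots_def std_coords_roots)
  moreover have "0 \<le> std_coords v c" for c
    using v by (simp add: positive_roots_def std_coords_def)
  ultimately have "std_coords v \<in> std_positive_roots T"
    by (simp add: std_positive_roots_def)
  then show "v \<in> quiver_coords ` std_positive_roots T"
    by (metis image_eqI quiver_coords_std_coords)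
next
  fix v assume "v \<in> quiver_coords ` std_positive_roots T"
  then obtain w where "w \<in> std_positive_roots T" "v = quiver_coords w"
    by blast
  then show "v \<in> positive_roots Q1"
    by (auto simp: positive_roots_def std_positive_roots_def quiver_coords_std_roots)
      (simp add: quiver_coords_def)
qed

lemma transfer_root_facts:
  assumes "std_sign_coherent T" and "finite (std_positive_roots T)"
    and "2 * card (std_positive_roots T) = m * h"
  shows "sign_coherent Q1" and "finite (positive_roots Q1)"
    and "2 * card (positive_roots Q1) = CARD('n) * h"
proof -
  show "sign_coherent Q1"
    unfolding sign_coherent_def
  proof
    fix v assume "v \<in> roots Q1"
    then have "(\<forall>c. 0 \<le> std_coords v c) \<or> (\<forall>c. std_coords v c \<le> 0)"
      using assms(1) std_coords_roots by (auto simp: std_sign_coherent_def)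
    then show "(\<forall>k. 0 \<le> v $ k) \<or> (\<forall>k. v $ k \<le> 0)"
      by (metis f_less g_f std_coords_def)
  qed
  show "finite (positive_roots Q1)"
    using assms(2) by (simp add: positive_roots_eq_image)
  have "inj_on quiver_coords (std_positive_roots T)"
    by (rule inj_onI) (metis std_coords_quiver_coords mem_Collect_eq std_positive_roots_def)
  then show "2 * card (positive_roots Q1) = CARD('n) * h"
    using assms(3) by (simp add: positive_roots_eq_image card_image card_vertices)
qed

lemma connected_quiver_if_valid:
  assumes "dynkin_valid T"
  shows "connected_quiver Q1"
proof -
  let ?R = "(adjacent Q1)\<^sup>*\<^sup>*"
  have "?R (g 0) (g k) \<and> ?R (g k) (g 0)" if "k < m" for k
    using that
  proof (induction k rule: less_induct)
    case (less k)
    show ?case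
    proof (cases "k = 0")
      case False
      then obtain l where "l < k" "std_edge T l k"
        using std_edge_to_smaller[OF assms] less.prems by blast
      then have "adjacent Q1 (g l) (g k)" "adjacent Q1 (g k) (g l)"
        using less.prems by (simp_all add: adjacent_iff f_g std_edge_def disj_commute)
      moreover have "?R (g 0) (g l)" "?R (g l) (g 0)"
        using less.IH[of l] \<open>l < k\<close> less.prems by simp_all
      ultimately show ?thesis
        by (meson converse_rtranclp_into_rtranclp rtranclp.rtrancl_into_rtrancl)
    qed simp
  qed
  then show ?thesis
    unfolding connected_quiver_def by (metis f_less g_f rtranclp_trans)
qed

end

lemma std_reflection_uminus: "std_reflection T k (- w) = - std_reflection T k w"
  by (rule ext) (simp add: std_reflection_def sum_negf)

lemma std_positive_roots_eqI:
  assumes simple: "\<And>k. k < dynkin_rank T \<Longrightarrow> unit_vec k \<in> R"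
    and closed: "\<And>w k. w \<in> R \<Longrightarrow> k < dynkin_rank T \<Longrightarrow>
                   std_reflection T k w \<in> R \<or> - std_reflection T k w \<in> R"
    and roots: "R \<subseteq> std_roots T"
    and nonneg: "\<And>w c. w \<in> R \<Longrightarrow> 0 \<le> w c"
    and nonzero: "(\<lambda>_. 0) \<notin> R"
  shows "std_positive_roots T = R" and "std_sign_coherent T"
proof -
  have cover: "w \<in> R \<or> - w \<in> R" if "w \<in> std_roots T" for w
    using that
  proof (induction rule: std_roots.induct)
    case (simple k)
    then show ?case
      using assms(1) by blast
  next
    case (reflect w k)
    from reflect.IH show ?case
    proof
      assume "w \<in> R"
      then show ?thesis
        using closed reflect.hyps(2) by blast
    next
      assume "- w \<in> R"
      moreover have "- (- std_reflection T k w) = std_reflection T k w"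
        by (simp add: fun_eq_iff)
      ultimately show ?thesis
        using closed[of "- w" k] reflect.hyps(2) unfolding std_reflection_uminus by metis
    qed
  qed
  show "std_sign_coherent T"
    unfolding std_sign_coherent_def
  proof
    fix w assume "w \<in> std_roots T"
    then have "w \<in> R \<or> - w \<in> R"
      by (rule cover)
    then show "(\<forall>c. 0 \<le> w c) \<or> (\<forall>c. w c \<le> 0)"
      using nonneg[of w] nonneg[of "- w"] by auto
  qed
  have "w \<in> R" if "w \<in> std_roots T" "\<forall>c. 0 \<le> w c" for w
  proof (rule ccontr)
    assume "w \<notin> R"
    then have "- w \<in> R"
      using cover[OF that(1)] by blast
    moreover have "- w = (\<lambda>_. 0)"
      using nonneg[OF \<open>- w \<in> R\<close>] that(2) by (auto simp: fun_eq_iff intro: order_antisym)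
    ultimately show False
      using nonzero by simp
  qed
  then show "std_positive_roots T = R"
    using roots nonneg by (auto simp: std_positive_roots_def)
qed


section \<open>Type A\<close>

lemma std_reflection_A:
  assumes "k < m"
  shows "std_reflection (Type_A m) k w
           = w(k := (if 0 < k then w (k - 1) else 0) + (if k + 1 < m then w (k + 1) else 0) - w k)"
proof -
  have "(\<Sum>c<m. std_cartan (Type_A m) k c * w c)
      = (\<Sum>c<m. (if c = k then 2 * w c else 0) - (if c = k - 1 then (if 0 < k then w c else 0) else 0)
                - (if c = k + 1 then w c else 0))"
    using assms by (intro sum.cong) (auto simp: std_cartan_def std_edge_def)
  also have "\<dots> = 2 * w k - (if 0 < k then w (k - 1) else 0) - (if k + 1 < m then w (k + 1) else 0)"
    using assms by (simp add: sum_subtractf)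
  finally show ?thesis
    by (simp add: std_reflection_def)
qed

text \<open>\<open>eps_diff i j\<close> is the root \<open>e\<^sub>i - e\<^sub>j = \<alpha>\<^sub>i + \<dots> + \<alpha>\<^sub>j\<^sub>-\<^sub>1\<close> in simple-root coordinates;
  the reflection at a path vertex \<open>k\<close> acts on the indices by the transposition of \<open>k\<close> and \<open>k + 1\<close>.\<close>

abbreviation swap_next :: "nat \<Rightarrow> nat \<Rightarrow> nat" where
  "swap_next k \<equiv> Transposition.transpose k (k + 1)"

definition eps_diff :: "nat \<Rightarrow> nat \<Rightarrow> nat \<Rightarrow> int" where
  "eps_diff i j = (\<lambda>c. if i \<le> c \<and> c < j then 1 else 0)"

lemma std_reflection_A_eps_diff:
  assumes "i < j" "j \<le> m" "k < m"
  shows "std_reflection (Type_A m) k (eps_diff i j)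
           = (if i = k \<and> j = k + 1 then - eps_diff i j else eps_diff (swap_next k i) (swap_next k j))"
proof -
  consider "i = k" "j = k + 1" | "i = k" "k + 1 < j" | "i = k + 1" | "j = k" | "i < k" "j = k + 1"
    | "i \<noteq> k" "i \<noteq> k + 1" "j \<noteq> k" "j \<noteq> k + 1"
    using assms by linarith
  then show ?thesis
    by cases (use assms in \<open>auto simp: std_reflection_A fun_eq_iff eps_diff_def Transposition.transpose_def\<close>)
qed

definition index_pairs :: "nat \<Rightarrow> (nat \<times> nat) set" where
  "index_pairs r = {(i, j). i < j \<and> j \<le> r}"

lemma finite_index_pairs [simp]: "finite (index_pairs r)"
  by (rule finite_subset[of _ "{..r} \<times> {..r}"]) (auto simp: index_pairs_def)

lemma card_index_pairs: "2 * card (index_pairs r) = r * (r + 1)"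
proof (induction r)
  case 0
  have "index_pairs 0 = {}"
    by (auto simp: index_pairs_def)
  then show ?case
    by simp
next
  case (Suc r)
  have "index_pairs (Suc r) = index_pairs r \<union> (\<lambda>i. (i, Suc r)) ` {..r}"
    by (auto simp: index_pairs_def)
  moreover have "card ((\<lambda>i. (i, Suc r)) ` {..r}) = Suc r"
    by (simp add: card_image inj_on_def)
  moreover have "index_pairs r \<inter> (\<lambda>i. (i, Suc r)) ` {..r} = {}"
    by (auto simp: index_pairs_def)
  ultimately have "card (index_pairs (Suc r)) = card (index_pairs r) + Suc r"
    by (simp add: card_Un_disjoint)
  then show ?case
    using Suc.IH by simp
qed

lemma eps_diff_inj:
  assumes "i < j" "i' < j'" "eps_diff i j = eps_diff i' j'"
  shows "i = i' \<and> j = j'"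
proof -
  have "eps_diff i j c = eps_diff i' j' c" for c
    using assms(3) by simp
  from this[of i] this[of i'] this[of "j - 1"] this[of "j' - 1"] show ?thesis
    using assms(1,2) by (auto simp: eps_diff_def split: if_splits)
qed

lemma eps_diff_nonneg: "0 \<le> eps_diff i j c"
  by (simp add: eps_diff_def)

lemma eps_diff_nonzero: "i < j \<Longrightarrow> eps_diff i j \<noteq> (\<lambda>_. 0)"
  by (auto simp: fun_eq_iff eps_diff_def intro!: exI[of _ i])

lemma eps_diff_std_roots:
  assumes path: "\<And>i j k. i < j \<Longrightarrow> j \<le> r \<Longrightarrow> k < r \<Longrightarrow> std_reflection T k (eps_diff i j)
                   = (if i = k \<and> j = k + 1 then - eps_diff i j else eps_diff (swap_next k i) (swap_next k j))"
    and "r \<le> dynkin_rank T" "i < j" "j \<le> r"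
  shows "eps_diff i j \<in> std_roots T"
  using assms(3,4)
proof (induction j)
  case (Suc j)
  show ?case
  proof (cases "i = j")
    case True
    have "eps_diff i (Suc i) = unit_vec i"
      by (auto simp: fun_eq_iff eps_diff_def unit_vec_def)
    then show ?thesis
      using True Suc.prems assms(2) by (simp add: std_roots.simple)
  next
    case False
    then have "std_reflection T j (eps_diff i j) = eps_diff i (Suc j)"
      using Suc.prems path[of i j j] by (simp add: Transposition.transpose_def)
    then show ?thesis
      using Suc False assms(2) std_roots.reflect[of "eps_diff i j" T j] by simp
  qed
qed simp

lemma eps_diff_reflection_closed:
  assumes path: "\<And>i j k. i < j \<Longrightarrow> j \<le> r \<Longrightarrow> k < r \<Longrightarrow> std_reflection T k (eps_diff i j)
                   = (if i = k \<and> j = k + 1 then - eps_diff i j else eps_diff (swap_next k i) (swap_next k j))"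
    and "(i, j) \<in> index_pairs r" "k < r"
  shows "std_reflection T k (eps_diff i j) \<in> case_prod eps_diff ` index_pairs r
         \<or> - std_reflection T k (eps_diff i j) \<in> case_prod eps_diff ` index_pairs r"
proof (cases "i = k \<and> j = k + 1")
  case True
  moreover have "- (- eps_diff i j) = eps_diff i j"
    by (simp add: fun_eq_iff)
  ultimately show ?thesis
    using assms path[of i j k] by (auto simp: index_pairs_def)
next
  case False
  then have "(swap_next k i, swap_next k j) \<in> index_pairs r"
    using assms(2,3) by (auto simp: index_pairs_def Transposition.transpose_def)
  then show ?thesis
    using False assms path[of i j k] by (force simp: index_pairs_def)
qed

lemma std_root_facts_A:
  "std_sign_coherent (Type_A m) \<and> finite (std_positive_roots (Type_A m))
   \<and> 2 * card (std_positive_roots (Type_A m)) = m * coxeter_number (Type_A m)"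
proof -
  let ?R = "case_prod eps_diff ` index_pairs m"
  note path = std_reflection_A_eps_diff[of _ _ m]
  have simple: "unit_vec k \<in> ?R" if "k < m" for k
  proof -
    have "unit_vec k = eps_diff k (k + 1)"
      by (auto simp: fun_eq_iff eps_diff_def unit_vec_def)
    then show ?thesis
      using that by (force simp: index_pairs_def)
  qed
  have closed: "std_reflection (Type_A m) k w \<in> ?R \<or> - std_reflection (Type_A m) k w \<in> ?R"
    if "w \<in> ?R" "k < m" for w k
    using that eps_diff_reflection_closed[where r = m, OF path] by auto
  have roots: "?R \<subseteq> std_roots (Type_A m)"
    using eps_diff_std_roots[where r = m, OF path] by (auto simp: index_pairs_def)
  have nonneg: "0 \<le> w c" if "w \<in> ?R" for w c
    using that by (auto simp: eps_diff_nonneg)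
  have nonzero: "(\<lambda>_. 0) \<notin> ?R"
    using eps_diff_nonzero by (force simp: index_pairs_def)
  have "std_positive_roots (Type_A m) = ?R" "std_sign_coherent (Type_A m)"
    using std_positive_roots_eqI[of "Type_A m" ?R] simple closed roots nonneg nonzero by simp_all
  moreover have "card ?R = card (index_pairs m)"
    by (rule card_image) (auto simp: inj_on_def index_pairs_def dest: eps_diff_inj)
  ultimately show ?thesis
    using card_index_pairs[of m] by (simp add: mult.commute)
qed

section \<open>Type D\<close>

lemma std_reflection_D_path:
  assumes "k \<le> n + 2"
  shows "std_reflection (Type_D (n + 4)) k w
           = w(k := (if 0 < k then w (k - 1) else 0) + (if k \<le> n + 1 then w (k + 1) else 0)
                    + (if k = n + 1 then w (n + 3) else 0) - w k)"
proof -
  have "(\<Sum>c<n + 4. std_cartan (Type_D (n + 4)) k c * w c)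
      = (\<Sum>c<n + 4. (if c = k then 2 * w c else 0) - (if c = k - 1 then (if 0 < k then w c else 0) else 0)
                - (if c = k + 1 then (if k \<le> n + 1 then w c else 0) else 0)
                - (if c = n + 3 then (if k = n + 1 then w c else 0) else 0))"
    using assms by (intro sum.cong) (auto simp: std_cartan_def std_edge_def)
  also have "\<dots> = 2 * w k - (if 0 < k then w (k - 1) else 0) - (if k \<le> n + 1 then w (k + 1) else 0)
                  - (if k = n + 1 then w (n + 3) else 0)"
    using assms by (simp add: sum_subtractf)
  finally show ?thesis
    by (simp add: std_reflection_def add.assoc)
qed

lemma std_reflection_D_branch:
  "std_reflection (Type_D (n + 4)) (n + 3) w = w(n + 3 := w (n + 1) - w (n + 3))"
proof -
  have "(\<Sum>c<n + 4. std_cartan (Type_D (n + 4)) (n + 3) c * w c)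
      = (\<Sum>c<n + 4. (if c = n + 3 then 2 * w c else 0) - (if c = n + 1 then w c else 0))"
    by (intro sum.cong) (auto simp: std_cartan_def std_edge_def)
  also have "\<dots> = 2 * w (n + 3) - w (n + 1)"
    by (simp add: sum_subtractf)
  finally show ?thesis
    by (simp add: std_reflection_def)
qed

text \<open>With \<open>\<alpha>\<^sub>k = e\<^sub>k - e\<^sub>k\<^sub>+\<^sub>1\<close> for \<open>k \<le> n + 2\<close> and \<open>\<alpha>\<^sub>n\<^sub>+\<^sub>3 = e\<^sub>n\<^sub>+\<^sub>2 + e\<^sub>n\<^sub>+\<^sub>3\<close>,
  \<open>eps_sum n i j\<close> is the root \<open>e\<^sub>i + e\<^sub>j\<close> of \<open>D\<^sub>n\<^sub>+\<^sub>4\<close> in simple-root coordinates.\<close>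

definition eps_sum :: "nat \<Rightarrow> nat \<Rightarrow> nat \<Rightarrow> nat \<Rightarrow> int" where
  "eps_sum n i j = (\<lambda>c. if c \<le> n + 1 then (if i \<le> c then 1 else 0) + (if j \<le> c then 1 else 0)
                        else if c = n + 2 then (if j \<le> n + 2 then 1 else 0)
                        else if c = n + 3 then 1 else 0)"

lemma std_reflection_D_eps_diff:
  assumes "i < j" "j \<le> n + 3" "k < n + 3"
  shows "std_reflection (Type_D (n + 4)) k (eps_diff i j)
           = (if i = k \<and> j = k + 1 then - eps_diff i j else eps_diff (swap_next k i) (swap_next k j))"
proof -
  consider "i = k" "j = k + 1" | "i = k" "k + 1 < j" | "i = k + 1" | "j = k" | "i < k" "j = k + 1"
    | "i \<noteq> k" "i \<noteq> k + 1" "j \<noteq> k" "j \<noteq> k + 1"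
    using assms by linarith
  then show ?thesis
    by cases
      (use assms in \<open>auto simp: std_reflection_D_path fun_eq_iff eps_diff_def Transposition.transpose_def\<close>)
qed

lemma std_reflection_D_eps_sum:
  assumes "i < j" "j \<le> n + 3" "k < n + 3"
  shows "std_reflection (Type_D (n + 4)) k (eps_sum n i j)
           = eps_sum n (min (swap_next k i) (swap_next k j)) (max (swap_next k i) (swap_next k j))"
proof -
  consider "i = k" "j = k + 1" | "i = k" "k + 1 < j" | "i = k + 1" | "j = k" | "i < k" "j = k + 1"
    | "i \<noteq> k" "i \<noteq> k + 1" "j \<noteq> k" "j \<noteq> k + 1"
    using assms by linarith
  then show ?thesis
    by cases
      (use assms in \<open>auto simp: std_reflection_D_path fun_eq_iff eps_sum_def Transposition.transpose_def\<close>)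
qed

lemma std_reflection_D_branch_eps_diff:
  assumes "i < j" "j \<le> n + 3"
  shows "std_reflection (Type_D (n + 4)) (n + 3) (eps_diff i j)
           = (if i \<le> n + 1 \<and> j = n + 2 then eps_sum n i (n + 3)
              else if i \<le> n + 1 \<and> j = n + 3 then eps_sum n i (n + 2) else eps_diff i j)"
  using assms by (auto simp: std_reflection_D_branch fun_eq_iff eps_diff_def eps_sum_def)

lemma std_reflection_D_branch_eps_sum:
  assumes "i < j" "j \<le> n + 3"
  shows "std_reflection (Type_D (n + 4)) (n + 3) (eps_sum n i j)
           = (if j \<le> n + 1 then eps_sum n i j else if j = n + 2 then eps_diff i (n + 3)
              else if i \<le> n + 1 then eps_diff i (n + 2) else - eps_sum n i j)"
  using assms by (auto simp: std_reflection_D_branch fun_eq_iff eps_diff_def eps_sum_def)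

lemma eps_sum_std_roots_D:
  assumes "i < j" "j \<le> n + 3"
  shows "eps_sum n i j \<in> std_roots (Type_D (n + 4))"
  using assms
proof (induction "n + 3 - j" arbitrary: j)
  case 0
  then have j: "j = n + 3"
    by simp
  show ?case
  proof (cases "i = n + 2")
    case True
    have "eps_sum n (n + 2) (n + 3) = unit_vec (n + 3)"
      by (auto simp: fun_eq_iff eps_sum_def unit_vec_def)
    then show ?thesis
      using True j std_roots.simple[of "n + 3" "Type_D (n + 4)"] by simp
  next
    case False
    then have "i \<le> n + 1"
      using 0 j by simp
    then have "std_reflection (Type_D (n + 4)) (n + 3) (eps_diff i (n + 2)) = eps_sum n i j"
      using j by (simp add: std_reflection_D_branch_eps_diff)
    moreover have "eps_diff i (n + 2) \<in> std_roots (Type_D (n + 4))"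
      using \<open>i \<le> n + 1\<close> by (intro eps_diff_std_roots[where r = "n + 3"] std_reflection_D_eps_diff) auto
    ultimately show ?thesis
      using std_roots.reflect[of "eps_diff i (n + 2)" "Type_D (n + 4)" "n + 3"] by simp
  qed
next
  case (Suc d)
  then have "std_reflection (Type_D (n + 4)) j (eps_sum n i (j + 1)) = eps_sum n i j"
    by (simp add: std_reflection_D_eps_sum Transposition.transpose_def)
  moreover have "eps_sum n i (j + 1) \<in> std_roots (Type_D (n + 4))"
    using Suc.hyps(1)[of "j + 1"] Suc.hyps(2) Suc.prems by simp
  ultimately show ?case
    using Suc.prems std_roots.reflect[of "eps_sum n i (j + 1)" "Type_D (n + 4)" j] by simp
qed

lemma eps_sum_inj:
  assumes "i < j" "j \<le> n + 3" "i' < j'" "j' \<le> n + 3" "eps_sum n i j = eps_sum n i' j'"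
  shows "i = i' \<and> j = j'"
proof -
  have eq: "eps_sum n i j c = eps_sum n i' j' c" for c
    using assms(5) by simp
  have "\<not> i < i'" if "i < j" "i' < j'" "j' \<le> n + 3" "eps_sum n i j i = eps_sum n i' j' i" for i j i' j'
    using that by (auto simp: eps_sum_def split: if_splits)
  then have i: "i = i'"
    using assms(1-4) eq[of i] eq[of i'] by (metis linorder_neqE_nat)
  have "\<not> j < j'" if "i < j" "j' \<le> n + 3" "eps_sum n i j j = eps_sum n i j' j"
    "eps_sum n i j (n + 2) = eps_sum n i j' (n + 2)" for j j'
    using that by (auto simp: eps_sum_def split: if_splits)
  then have "j = j'"
    using assms(1-4) eq[of j] eq[of j'] eq[of "n + 2"] i by (metis linorder_neqE_nat)
  with i show ?thesis ..
qed

lemma std_root_facts_D: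
  assumes "4 \<le> m"
  shows "std_sign_coherent (Type_D m) \<and> finite (std_positive_roots (Type_D m))
         \<and> 2 * card (std_positive_roots (Type_D m)) = m * coxeter_number (Type_D m)"
proof -
  obtain n where m: "m = n + 4"
    using assms by (metis add.commute le_add_diff_inverse)
  let ?T = "Type_D (n + 4)" and ?P = "index_pairs (n + 3)"
  let ?E = "case_prod eps_diff ` ?P" and ?S = "case_prod (eps_sum n) ` ?P"
  note path = std_reflection_D_eps_diff[of _ _ n]
  have simple: "unit_vec k \<in> ?E \<union> ?S" if "k < n + 4" for k
  proof (cases "k = n + 3")
    case True
    have "unit_vec k = eps_sum n (n + 2) (n + 3)"
      using True by (auto simp: fun_eq_iff eps_sum_def unit_vec_def)
    then show ?thesis
      by (force simp: index_pairs_def)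
  next
    case False
    have "unit_vec k = eps_diff k (k + 1)"
      by (auto simp: fun_eq_iff eps_diff_def unit_vec_def)
    then show ?thesis
      using False that by (force simp: index_pairs_def)
  qed
  have closed: "std_reflection ?T k w \<in> ?E \<union> ?S \<or> - std_reflection ?T k w \<in> ?E \<union> ?S"
    if "w \<in> ?E \<union> ?S" "k < n + 4" for w k
  proof (cases "k = n + 3")
    case True
    have E: "eps_diff i j \<in> ?E" and S: "eps_sum n i j \<in> ?S" if "i < j" "j \<le> n + 3" for i j
      using that by (force simp: index_pairs_def)+
    have neg: "- (- eps_sum n i j) = eps_sum n i j" for i j
      by (simp add: fun_eq_iff)
    from that(1) obtain i j where ij: "(i, j) \<in> ?P" and "w = eps_diff i j \<or> w = eps_sum n i j"
      by auto
    moreover have "std_reflection ?T (n + 3) (eps_diff i j) \<in> ?E \<union> ?S"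
      using ij E S by (simp add: index_pairs_def std_reflection_D_branch_eps_diff)
    moreover have "std_reflection ?T (n + 3) (eps_sum n i j) \<in> ?E \<union> ?S
        \<or> - std_reflection ?T (n + 3) (eps_sum n i j) \<in> ?E \<union> ?S"
      using ij E S neg by (simp add: index_pairs_def std_reflection_D_branch_eps_sum)
    ultimately show ?thesis
      using True by blast
  next
    case False
    then have k: "k < n + 3"
      using that(2) by simp
    from that(1) obtain i j where ij: "(i, j) \<in> ?P" and "w = eps_diff i j \<or> w = eps_sum n i j"
      by auto
    moreover have "std_reflection ?T k (eps_diff i j) \<in> ?E \<or> - std_reflection ?T k (eps_diff i j) \<in> ?E"
      using eps_diff_reflection_closed[where r = "n + 3", OF path ij k] .
    moreover have "std_reflection ?T k (eps_sum n i j) \<in> ?S"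
    proof -
      let ?i = "swap_next k i" and ?j = "swap_next k j"
      have "(min ?i ?j, max ?i ?j) \<in> ?P"
        using ij k by (auto simp: index_pairs_def Transposition.transpose_def)
      then show ?thesis
        using ij k by (force simp: index_pairs_def std_reflection_D_eps_sum)
    qed
    ultimately show ?thesis
      by blast
  qed
  have roots: "?E \<union> ?S \<subseteq> std_roots ?T"
    using eps_diff_std_roots[where r = "n + 3", OF path] eps_sum_std_roots_D
    by (auto simp: index_pairs_def)
  have nonneg: "0 \<le> w c" if "w \<in> ?E \<union> ?S" for w c
    using that by (auto simp: eps_diff_nonneg eps_sum_def)
  have E_branch: "w (n + 3) = 0" if "w \<in> ?E" for w
    using that by (auto simp: index_pairs_def eps_diff_def)
  have S_branch: "w (n + 3) = 1" if "w \<in> ?S" for w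
    using that by (auto simp: eps_sum_def)
  have "(\<lambda>_. 0) \<notin> ?E"
  proof
    assume "(\<lambda>_. 0) \<in> ?E"
    then obtain i j where "(i, j) \<in> ?P" "(\<lambda>_. 0) = eps_diff i j"
      by auto
    then show False
      using eps_diff_nonzero[of i j] by (simp add: index_pairs_def)
  qed
  moreover have "(\<lambda>_. 0) \<notin> ?S"
    using S_branch[of "\<lambda>_. 0"] by (metis zero_neq_one)
  ultimately have nonzero: "(\<lambda>_. 0) \<notin> ?E \<union> ?S"
    by blast
  have "std_positive_roots ?T = ?E \<union> ?S" "std_sign_coherent ?T"
    using std_positive_roots_eqI[of ?T "?E \<union> ?S"] simple closed roots nonneg nonzero by simp_all
  moreover have "card (?E \<union> ?S) = card ?E + card ?S"
  proof (rule card_Un_disjoint)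
    show "?E \<inter> ?S = {}"
      using E_branch S_branch by fastforce
  qed simp_all
  moreover have "card ?E = card ?P"
    by (rule card_image) (auto simp: inj_on_def index_pairs_def dest: eps_diff_inj)
  moreover have "card ?S = card ?P"
    by (rule card_image) (auto simp: inj_on_def index_pairs_def dest: eps_sum_inj)
  ultimately show ?thesis
    using card_index_pairs[of "n + 3"] m by (simp add: algebra_simps)
qed

section \<open>Type E\<close>

text \<open>For \<open>E\<^sub>6, E\<^sub>7, E\<^sub>8\<close> the positive roots are listed explicitly, grouped by height, and
  the list is certified by evaluation: each root of height \<open>d + 1\<close> is a simple reflection of one of
  height \<open>d\<close>, and each simple reflection of a listed root is the root itself, its negative, or a listed
  root of height \<open>d \<plusminus> 1\<close>.\<close>

definition list_vec :: "int list \<Rightarrow> nat \<Rightarrow> int" where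
  "list_vec l c = (if c < length l then l ! c else 0)"

definition list_reflection :: "dynkin_type \<Rightarrow> nat \<Rightarrow> int list \<Rightarrow> int list" where
  "list_reflection T k l = l[k := l ! k - (\<Sum>c\<leftarrow>[0..<length l]. std_cartan T k c * l ! c)]"

definition unit_list :: "nat \<Rightarrow> nat \<Rightarrow> int list" where
  "unit_list m k = map (\<lambda>c. if c = k then 1 else 0) [0..<m]"

fun generated_levels :: "dynkin_type \<Rightarrow> int list list \<Rightarrow> int list list list \<Rightarrow> bool" where
  "generated_levels T prev [] = True"
| "generated_levels T prev (cur # rest) \<longleftrightarrow>
     (\<forall>v\<in>set cur. \<exists>u\<in>set prev. \<exists>k\<in>set [0..<dynkin_rank T]. list_reflection T k u = v)
     \<and> generated_levels T cur rest"

fun closed_levels :: "dynkin_type \<Rightarrow> int list list \<Rightarrow> int list list list \<Rightarrow> bool" where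
  "closed_levels T prev [] = True"
| "closed_levels T prev (cur # rest) \<longleftrightarrow>
     (\<forall>v\<in>set cur. \<forall>k\<in>set [0..<dynkin_rank T].
        list_reflection T k v \<in> {v, map uminus v} \<union> set prev \<union> set (case rest of [] \<Rightarrow> [] | nxt # _ \<Rightarrow> nxt))
     \<and> closed_levels T cur rest"

definition root_certificate :: "dynkin_type \<Rightarrow> int list list list \<Rightarrow> bool" where
  "root_certificate T levels \<longleftrightarrow>
     levels \<noteq> [] \<and> set (hd levels) = set (map (unit_list (dynkin_rank T)) [0..<dynkin_rank T])
     \<and> (\<forall>l\<in>set (concat levels). length l = dynkin_rank T \<and> (\<forall>x\<in>set l. 0 \<le> x) \<and> (\<exists>x\<in>set l. x \<noteq> 0))
     \<and> distinct (concat levels)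
     \<and> generated_levels T (hd levels) (tl levels) \<and> closed_levels T [] levels
     \<and> 2 * length (concat levels) = dynkin_rank T * coxeter_number T"

lemma list_vec_list_reflection:
  assumes "length l = dynkin_rank T" "k < dynkin_rank T"
  shows "list_vec (list_reflection T k l) = std_reflection T k (list_vec l)"
proof -
  have "(\<Sum>c\<leftarrow>[0..<length l]. std_cartan T k c * l ! c) = (\<Sum>c<length l. std_cartan T k c * list_vec l c)"
    by (auto simp: interv_sum_list_conv_sum_set_nat atLeast0LessThan list_vec_def intro!: sum.cong)
  then show ?thesis
    using assms by (auto simp: fun_eq_iff list_vec_def list_reflection_def std_reflection_def)
qed

lemma list_vec_unit_list: "k < m \<Longrightarrow> list_vec (unit_list m k) = unit_vec k"
  by (auto simp: fun_eq_iff list_vec_def unit_list_def unit_vec_def)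

lemma list_vec_map_uminus: "list_vec (map uminus l) = - list_vec l"
  by (simp add: fun_eq_iff list_vec_def)

lemma inj_on_list_vec: "inj_on list_vec {l. length l = m}"
  by (rule inj_onI) (metis (mono_tags) list_vec_def mem_Collect_eq nth_equalityI)

lemma closed_levels_sound:
  assumes "closed_levels T prev levels" "v \<in> set (concat levels)" "k < dynkin_rank T"
  shows "list_reflection T k v \<in> {v, map uminus v} \<union> set prev \<union> set (concat levels)"
  using assms
proof (induction levels arbitrary: prev)
  case (Cons cur rest)
  show ?case
  proof (cases "v \<in> set cur")
    case True
    have "\<forall>v\<in>set cur. \<forall>k\<in>set [0..<dynkin_rank T].
        list_reflection T k v \<in> {v, map uminus v} \<union> set prev \<union> set (case rest of [] \<Rightarrow> [] | nxt # _ \<Rightarrow> nxt)"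
      using Cons.prems(1) by simp
    then have "list_reflection T k v \<in> {v, map uminus v} \<union> set prev \<union> set (case rest of [] \<Rightarrow> [] | nxt # _ \<Rightarrow> nxt)"
      using True Cons.prems(3) by simp
    then show ?thesis
      by (cases rest) auto
  next
    case False
    then show ?thesis
      using Cons by auto
  qed
qed simp

lemma generated_levels_sound:
  assumes "generated_levels T prev levels"
    and "\<forall>u\<in>set prev. list_vec u \<in> std_roots T \<and> length u = dynkin_rank T"
    and "\<forall>v\<in>set (concat levels). length v = dynkin_rank T"
  shows "\<forall>v\<in>set (concat levels). list_vec v \<in> std_roots T"
  using assms
proof (induction levels arbitrary: prev)
  case (Cons cur rest)
  have "list_vec v \<in> std_roots T" if "v \<in> set cur" for v
  proof -
    obtain u k where "u \<in> set prev" "k < dynkin_rank T" "list_reflection T k u = v"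
      using Cons.prems(1) \<open>v \<in> set cur\<close> by auto
    then show ?thesis
      using Cons.prems(2) list_vec_list_reflection std_roots.reflect by metis
  qed
  moreover have "\<forall>v\<in>set (concat rest). list_vec v \<in> std_roots T"
    using Cons.IH[of cur] Cons.prems calculation by auto
  ultimately show ?case
    by auto
qed simp

lemma root_certificate_sound:
  assumes "root_certificate T levels"
  shows "std_sign_coherent T \<and> finite (std_positive_roots T)
         \<and> 2 * card (std_positive_roots T) = dynkin_rank T * coxeter_number T"
proof -
  let ?m = "dynkin_rank T" and ?L = "concat levels"
  let ?R = "list_vec ` set ?L"
  have levels: "levels = hd levels # tl levels"
    using assms by (simp add: root_certificate_def)
  then have set_L: "set ?L = set (hd levels) \<union> set (concat (tl levels))"
    by (metis concat.simps(2) set_append)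
  have length: "length l = ?m" if "l \<in> set ?L" for l
    using assms that by (auto simp: root_certificate_def)
  have units: "set (hd levels) = unit_list ?m ` {..<?m}"
    using assms by (auto simp: root_certificate_def)
  have simple: "unit_vec k \<in> ?R" if "k < ?m" for k
    using that set_L units list_vec_unit_list[OF that] by (metis UnI1 image_eqI lessThan_iff)
  have hd_roots: "\<forall>u\<in>set (hd levels). list_vec u \<in> std_roots T \<and> length u = ?m"
    using units list_vec_unit_list std_roots.simple by (auto simp: unit_list_def)
  have "generated_levels T (hd levels) (tl levels)"
    using assms by (simp add: root_certificate_def)
  moreover have "\<forall>v\<in>set (concat (tl levels)). length v = ?m"
    using length set_L by blast
  ultimately have "\<forall>v\<in>set (concat (tl levels)). list_vec v \<in> std_roots T"
    using generated_levels_sound hd_roots by blast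
  then have roots: "?R \<subseteq> std_roots T"
    using hd_roots set_L by auto
  have closed: "std_reflection T k w \<in> ?R \<or> - std_reflection T k w \<in> ?R" if "w \<in> ?R" "k < ?m" for w k
  proof -
    obtain v where v: "v \<in> set ?L" "w = list_vec v"
      using \<open>w \<in> ?R\<close> by blast
    then have "list_reflection T k v \<in> {v, map uminus v} \<union> set ?L"
      using closed_levels_sound[of T "[]" levels v k] assms that(2) by (simp add: root_certificate_def)
    moreover have "std_reflection T k w = list_vec (list_reflection T k v)"
      using v length that(2) by (simp add: list_vec_list_reflection)
    moreover have "- (- list_vec v) = list_vec v"
      by (simp add: fun_eq_iff)
    ultimately show ?thesis
      using v by (auto simp: list_vec_map_uminus)
  qed
  have entries: "(\<forall>x\<in>set l. 0 \<le> x) \<and> (\<exists>x\<in>set l. x \<noteq> 0)" if "l \<in> set ?L" for l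
    using assms that unfolding root_certificate_def by blast
  have nonneg: "0 \<le> w c" if "w \<in> ?R" for w c
  proof -
    obtain l where "l \<in> set ?L" "w = list_vec l"
      using \<open>w \<in> ?R\<close> by blast
    then show ?thesis
      using entries[of l] nth_mem[of c l] by (auto simp: list_vec_def)
  qed
  have nonzero: "(\<lambda>_. 0) \<notin> ?R"
  proof
    assume "(\<lambda>_. 0) \<in> ?R"
    then obtain l where l: "l \<in> set ?L" "(\<lambda>_. 0) = list_vec l"
      by blast
    obtain i where "i < length l" "l ! i \<noteq> 0"
      using entries[OF l(1)] by (auto simp: in_set_conv_nth)
    then show False
      using fun_cong[OF l(2), of i] by (simp add: list_vec_def)
  qed
  have "std_positive_roots T = ?R" "std_sign_coherent T"
    using std_positive_roots_eqI[of T ?R] simple closed roots nonneg nonzero by simp_all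
  moreover have "card ?R = card (set ?L)"
    by (rule card_image, rule inj_on_subset[OF inj_on_list_vec[of ?m]]) (use length in blast)
  moreover have "card (set ?L) = length ?L"
    using assms unfolding root_certificate_def by (metis distinct_card)
  ultimately show ?thesis
    using assms by (simp add: root_certificate_def)
qed

definition E6_positive_roots :: "int list list list" where
  "E6_positive_roots =
   [[[0,0,0,0,0,1], [0,0,0,0,1,0], [0,0,0,1,0,0], [0,0,1,0,0,0], [0,1,0,0,0,0], [1,0,0,0,0,0]],
    [[0,0,0,1,1,0], [0,0,1,0,0,1], [0,0,1,1,0,0], [0,1,1,0,0,0], [1,1,0,0,0,0]],
    [[0,0,1,1,0,1], [0,0,1,1,1,0], [0,1,1,0,0,1], [0,1,1,1,0,0], [1,1,1,0,0,0]],
    [[0,0,1,1,1,1], [0,1,1,1,0,1], [0,1,1,1,1,0], [1,1,1,0,0,1], [1,1,1,1,0,0]],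
    [[0,1,1,1,1,1], [0,1,2,1,0,1], [1,1,1,1,0,1], [1,1,1,1,1,0]],
    [[0,1,2,1,1,1], [1,1,1,1,1,1], [1,1,2,1,0,1]],
    [[0,1,2,2,1,1], [1,1,2,1,1,1], [1,2,2,1,0,1]],
    [[1,1,2,2,1,1], [1,2,2,1,1,1]],
    [[1,2,2,2,1,1]],
    [[1,2,3,2,1,1]],
    [[1,2,3,2,1,2]]]"

definition E7_positive_roots :: "int list list list" where
  "E7_positive_roots =
   [[[0,0,0,0,0,0,1], [0,0,0,0,0,1,0], [0,0,0,0,1,0,0], [0,0,0,1,0,0,0], [0,0,1,0,0,0,0],
     [0,1,0,0,0,0,0], [1,0,0,0,0,0,0]],
    [[0,0,0,0,1,1,0], [0,0,0,1,1,0,0], [0,0,1,0,0,0,1], [0,0,1,1,0,0,0], [0,1,1,0,0,0,0],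
     [1,1,0,0,0,0,0]],
    [[0,0,0,1,1,1,0], [0,0,1,1,0,0,1], [0,0,1,1,1,0,0], [0,1,1,0,0,0,1], [0,1,1,1,0,0,0],
     [1,1,1,0,0,0,0]],
    [[0,0,1,1,1,0,1], [0,0,1,1,1,1,0], [0,1,1,1,0,0,1], [0,1,1,1,1,0,0], [1,1,1,0,0,0,1],
     [1,1,1,1,0,0,0]],
    [[0,0,1,1,1,1,1], [0,1,1,1,1,0,1], [0,1,1,1,1,1,0], [0,1,2,1,0,0,1], [1,1,1,1,0,0,1],
     [1,1,1,1,1,0,0]],
    [[0,1,1,1,1,1,1], [0,1,2,1,1,0,1], [1,1,1,1,1,0,1], [1,1,1,1,1,1,0], [1,1,2,1,0,0,1]],
    [[0,1,2,1,1,1,1], [0,1,2,2,1,0,1], [1,1,1,1,1,1,1], [1,1,2,1,1,0,1], [1,2,2,1,0,0,1]],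
    [[0,1,2,2,1,1,1], [1,1,2,1,1,1,1], [1,1,2,2,1,0,1], [1,2,2,1,1,0,1]],
    [[0,1,2,2,2,1,1], [1,1,2,2,1,1,1], [1,2,2,1,1,1,1], [1,2,2,2,1,0,1]],
    [[1,1,2,2,2,1,1], [1,2,2,2,1,1,1], [1,2,3,2,1,0,1]],
    [[1,2,2,2,2,1,1], [1,2,3,2,1,0,2], [1,2,3,2,1,1,1]],
    [[1,2,3,2,1,1,2], [1,2,3,2,2,1,1]],
    [[1,2,3,2,2,1,2], [1,2,3,3,2,1,1]],
    [[1,2,3,3,2,1,2]],
    [[1,2,4,3,2,1,2]],
    [[1,3,4,3,2,1,2]],
    [[2,3,4,3,2,1,2]]]"

definition E8_positive_roots :: "int list list list" where
  "E8_positive_roots =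
   [[[0,0,0,0,0,0,0,1], [0,0,0,0,0,0,1,0], [0,0,0,0,0,1,0,0], [0,0,0,0,1,0,0,0],
     [0,0,0,1,0,0,0,0], [0,0,1,0,0,0,0,0], [0,1,0,0,0,0,0,0], [1,0,0,0,0,0,0,0]],
    [[0,0,0,0,0,1,1,0], [0,0,0,0,1,1,0,0], [0,0,0,1,1,0,0,0], [0,0,1,0,0,0,0,1],
     [0,0,1,1,0,0,0,0], [0,1,1,0,0,0,0,0], [1,1,0,0,0,0,0,0]],
    [[0,0,0,0,1,1,1,0], [0,0,0,1,1,1,0,0], [0,0,1,1,0,0,0,1], [0,0,1,1,1,0,0,0],
     [0,1,1,0,0,0,0,1], [0,1,1,1,0,0,0,0], [1,1,1,0,0,0,0,0]],
    [[0,0,0,1,1,1,1,0], [0,0,1,1,1,0,0,1], [0,0,1,1,1,1,0,0], [0,1,1,1,0,0,0,1],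
     [0,1,1,1,1,0,0,0], [1,1,1,0,0,0,0,1], [1,1,1,1,0,0,0,0]],
    [[0,0,1,1,1,1,0,1], [0,0,1,1,1,1,1,0], [0,1,1,1,1,0,0,1], [0,1,1,1,1,1,0,0],
     [0,1,2,1,0,0,0,1], [1,1,1,1,0,0,0,1], [1,1,1,1,1,0,0,0]],
    [[0,0,1,1,1,1,1,1], [0,1,1,1,1,1,0,1], [0,1,1,1,1,1,1,0], [0,1,2,1,1,0,0,1],
     [1,1,1,1,1,0,0,1], [1,1,1,1,1,1,0,0], [1,1,2,1,0,0,0,1]],
    [[0,1,1,1,1,1,1,1], [0,1,2,1,1,1,0,1], [0,1,2,2,1,0,0,1], [1,1,1,1,1,1,0,1],
     [1,1,1,1,1,1,1,0], [1,1,2,1,1,0,0,1], [1,2,2,1,0,0,0,1]],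
    [[0,1,2,1,1,1,1,1], [0,1,2,2,1,1,0,1], [1,1,1,1,1,1,1,1], [1,1,2,1,1,1,0,1],
     [1,1,2,2,1,0,0,1], [1,2,2,1,1,0,0,1]],
    [[0,1,2,2,1,1,1,1], [0,1,2,2,2,1,0,1], [1,1,2,1,1,1,1,1], [1,1,2,2,1,1,0,1],
     [1,2,2,1,1,1,0,1], [1,2,2,2,1,0,0,1]],
    [[0,1,2,2,2,1,1,1], [1,1,2,2,1,1,1,1], [1,1,2,2,2,1,0,1], [1,2,2,1,1,1,1,1],
     [1,2,2,2,1,1,0,1], [1,2,3,2,1,0,0,1]],
    [[0,1,2,2,2,2,1,1], [1,1,2,2,2,1,1,1], [1,2,2,2,1,1,1,1], [1,2,2,2,2,1,0,1],
     [1,2,3,2,1,0,0,2], [1,2,3,2,1,1,0,1]],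
    [[1,1,2,2,2,2,1,1], [1,2,2,2,2,1,1,1], [1,2,3,2,1,1,0,2], [1,2,3,2,1,1,1,1],
     [1,2,3,2,2,1,0,1]],
    [[1,2,2,2,2,2,1,1], [1,2,3,2,1,1,1,2], [1,2,3,2,2,1,0,2], [1,2,3,2,2,1,1,1],
     [1,2,3,3,2,1,0,1]],
    [[1,2,3,2,2,1,1,2], [1,2,3,2,2,2,1,1], [1,2,3,3,2,1,0,2], [1,2,3,3,2,1,1,1]],
    [[1,2,3,2,2,2,1,2], [1,2,3,3,2,1,1,2], [1,2,3,3,2,2,1,1], [1,2,4,3,2,1,0,2]],
    [[1,2,3,3,2,2,1,2], [1,2,3,3,3,2,1,1], [1,2,4,3,2,1,1,2], [1,3,4,3,2,1,0,2]],
    [[1,2,3,3,3,2,1,2], [1,2,4,3,2,2,1,2], [1,3,4,3,2,1,1,2], [2,3,4,3,2,1,0,2]],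
    [[1,2,4,3,3,2,1,2], [1,3,4,3,2,2,1,2], [2,3,4,3,2,1,1,2]],
    [[1,2,4,4,3,2,1,2], [1,3,4,3,3,2,1,2], [2,3,4,3,2,2,1,2]],
    [[1,3,4,4,3,2,1,2], [2,3,4,3,3,2,1,2]],
    [[1,3,5,4,3,2,1,2], [2,3,4,4,3,2,1,2]],
    [[1,3,5,4,3,2,1,3], [2,3,5,4,3,2,1,2]],
    [[2,3,5,4,3,2,1,3], [2,4,5,4,3,2,1,2]],
    [[2,4,5,4,3,2,1,3]],
    [[2,4,6,4,3,2,1,3]],
    [[2,4,6,5,3,2,1,3]],
    [[2,4,6,5,4,2,1,3]],
    [[2,4,6,5,4,3,1,3]],
    [[2,4,6,5,4,3,2,3]]]"

lemma root_certificate_E6: "root_certificate (Type_E 6) E6_positive_roots"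
  by code_simp

lemma root_certificate_E7: "root_certificate (Type_E 7) E7_positive_roots"
  by code_simp

lemma root_certificate_E8: "root_certificate (Type_E 8) E8_positive_roots"
  by code_simp

lemma std_root_facts_E:
  assumes "m \<in> {6, 7, 8}"
  shows "std_sign_coherent (Type_E m) \<and> finite (std_positive_roots (Type_E m))
         \<and> 2 * card (std_positive_roots (Type_E m)) = m * coxeter_number (Type_E m)"
  using assms root_certificate_sound[OF root_certificate_E6] root_certificate_sound[OF root_certificate_E7]
    root_certificate_sound[OF root_certificate_E8]
  by auto

lemma std_root_facts:
  assumes "dynkin_valid T"
  shows "std_sign_coherent T \<and> finite (std_positive_roots T)
         \<and> 2 * card (std_positive_roots T) = dynkin_rank T * coxeter_number T"
  using assms by (cases T) (simp_all add: std_root_facts_A std_root_facts_D std_root_facts_E)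

lemma coxeter_number_pos: "dynkin_valid T \<Longrightarrow> 0 < coxeter_number T"
  by (cases T) auto

theorem proposition3p8:
  fixes T :: dynkin_type and Q1 :: "('n::finite \<times> 'n) set" and z :: "'n \<Rightarrow> complex"
  assumes "dynkin_quiver T Q1"
    and "\<forall>i. z i \<in> semi_closed_upper_half_plane"
  shows "complex_of_real (cat_volume Q1 z)
           = (\<Sum>i\<in>UNIV. \<Sum>j\<in>UNIV. complex_of_real (chi_inv Q1 i j) * z i * cnj (z j))
       \<and> (\<Sum>i\<in>UNIV. \<Sum>j\<in>UNIV. complex_of_real (chi_inv Q1 i j) * z i * cnj (z j))
           = complex_of_real (1 / real (coxeter_number T) *
               (\<Sum>M\<in>positive_roots Q1. (cmod (central_charge z M))\<^sup>2))
       \<and> (\<forall>i j. chi_inv Q1 i j = 1 / real (coxeter_number T) *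
               (\<Sum>M\<in>positive_roots Q1. real_of_int (M $ i) * real_of_int (M $ j)))"
proof -
  have valid: "dynkin_valid T"
    using assms(1) by (simp add: dynkin_quiver_def)
  obtain f where "bij_betw f UNIV {..<dynkin_rank T}" "\<And>i j. adjacent Q1 i j \<longleftrightarrow> std_edge T (f i) (f j)"
    using assms(1) by (auto simp: dynkin_quiver_def atLeast0LessThan)
  then interpret dynkin_labelling T Q1 f
    by unfold_locales
  have chi: "chi_inv Q1 i j = 1 / real (coxeter_number T) *
      (\<Sum>M\<in>positive_roots Q1. real_of_int (M $ i) * real_of_int (M $ j))" for i j
    using std_root_facts[OF valid] transfer_root_facts[of "coxeter_number T"]
    by (intro chi_inv_eq_sum_positive_roots connected_quiver_if_valid valid coxeter_number_pos) auto
  then have form: "(\<Sum>i\<in>UNIV. \<Sum>j\<in>UNIV. complex_of_real (chi_inv Q1 i j) * z i * cnj (z j))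
      = complex_of_real (1 / real (coxeter_number T) * (\<Sum>M\<in>positive_roots Q1. (cmod (central_charge z M))\<^sup>2))"
    by (simp only: sum_outer_products_central_charge)
  have nonneg: "0 \<le> 1 / real (coxeter_number T) * (\<Sum>M\<in>positive_roots Q1. (cmod (central_charge z M))\<^sup>2)"
    by (intro mult_nonneg_nonneg sum_nonneg) auto
  have "complex_of_real (cat_volume Q1 z)
      = (\<Sum>i\<in>UNIV. \<Sum>j\<in>UNIV. complex_of_real (chi_inv Q1 i j) * z i * cnj (z j))"
    unfolding cat_volume_def form norm_of_real abs_of_nonneg[OF nonneg] ..
  with form chi show ?thesis
    by blast
qed

end
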